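(* If $\bar c>q\sigma^2/(2\mu)$, there exists a unique $\bar z>0$ such that $\partial_xb_0(\bar z,\bar c)=0$. Moreover $\partial_xb_0(x,\bar c)<0$ for $x\in(0,\bar z)$ (and $\lim_{x\to0^+}\partial_xb_0(x,\bar c)<0$), $\partial_xb_0(x,\bar c)>0$ for $x\in(\bar z,\infty)$, and $\partial_{xx}b_0(\bar z,\bar c)>0$.
   Context: Fix constants $\mu>0$, $\sigma>0$, $q>0$. For $c\ge0$, $\theta_1(c)=\frac{c-\mu+\sqrt{(c-\mu)^2+2q\sigma^2}}{\sigma^2}>0$, $\theta_2(c)=\frac{c-\mu-\sqrt{(c-\mu)^2+2q\sigma^2}}{\sigma^2}<0$, with $\theta_2'$ its derivative. For $x>0$, $b_0(x,c)=\dfrac{-\frac1q(1-e^{\theta_2(c)x})+\frac cq\theta_2'(c)e^{\theta_2(c)x}x}{e^{\theta_1(c)x}-e^{\theta_2(c)x}}$. *)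

theory Defs
  imports "HOL-Analysis.Analysis"
begin

definition theta1 :: "real \<Rightarrow> real \<Rightarrow> real \<Rightarrow> real \<Rightarrow> real" where
  "theta1 mu sg q c = (c - mu + sqrt ((c - mu)^2 + 2 * q * sg^2)) / sg^2"

definition theta2 :: "real \<Rightarrow> real \<Rightarrow> real \<Rightarrow> real \<Rightarrow> real" where
  "theta2 mu sg q c = (c - mu - sqrt ((c - mu)^2 + 2 * q * sg^2)) / sg^2"

definition b0 :: "real \<Rightarrow> real \<Rightarrow> real \<Rightarrow> real \<Rightarrow> real \<Rightarrow> real" where
  "b0 mu sg q x c =
     (-(1/q) * (1 - exp (theta2 mu sg q c * x))
      + (c/q) * deriv (theta2 mu sg q) c * exp (theta2 mu sg q c * x) * x)
     / (exp (theta1 mu sg q c * x) - exp (theta2 mu sg q c * x))"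

end

theory Submission
  imports Defs "HOL-Real_Asymp.Real_Asymp"
begin

(*
  Put a = theta1(c), b = -theta2(c) and k = c theta2'(c). On x > 0, b0(x,c) equals
  (1 + k x - e^(b x)) / (q (e^((a+b) x) - 1)), whose x-derivative is dnum(x) / (q (e^((a+b) x) - 1)^2)
  for an exponential polynomial dnum with dnum' = e^(b x) dnum1 and dnum1' = (a+b) e^(a x) dnum2.
  A function that starts at a nonpositive value, tends to +infinity and whose derivative is
  negative and then positive has exactly one positive zero; applying this to dnum2, dnum1 and dnum
  in turn (the hypothesis on c is what makes dnum2(0) = ab - (a+b)k negative) gives the unique
  critical point z, and the second derivative at z is a positive multiple of dnum'(z) > 0.
  Near 0, dnum(x) ~ (a+b)(ab - (a+b)k) x^2 / 2, so the derivative tends to (ab - (a+b)k) / (2q(a+b)) < 0.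
*)

definition sign_change_at :: "(real \<Rightarrow> real) \<Rightarrow> real \<Rightarrow> bool" where
  "sign_change_at g z \<longleftrightarrow> (\<forall>x. 0 < x \<and> x < z \<longrightarrow> g x < 0) \<and> (\<forall>x>z. g x > 0)"

lemma sign_change_at_mult_pos:
  assumes "sign_change_at g z" "z \<ge> 0" "\<And>x. x > 0 \<Longrightarrow> h x > 0"
  shows "sign_change_at (\<lambda>x. h x * g x) z"
  using assms by (auto simp: sign_change_at_def mult_pos_neg)

lemma sign_change_at_from_deriv:
  fixes f f' :: "real \<Rightarrow> real" and x0 :: real
  assumes deriv: "\<And>x. x \<ge> 0 \<Longrightarrow> (f has_real_derivative f' x) (at x)"
    and "x0 \<ge> 0"
    and "sign_change_at f' x0"
    and "f 0 \<le> 0" and "0 < x0 \<or> f 0 < 0"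
    and lim: "filterlim f at_top at_top"
  shows "\<exists>z>x0. f z = 0 \<and> sign_change_at f z"
proof -
  have neg: "f' x < 0" if "0 < x" "x < x0" for x
    using that \<open>sign_change_at f' x0\<close> by (simp add: sign_change_at_def)
  have pos: "f' x > 0" if "x0 < x" for x
    using that \<open>sign_change_at f' x0\<close> by (simp add: sign_change_at_def)
  have cont: "continuous_on {a..b} f" if "0 \<le> a" for a b
    using that by (intro continuous_at_imp_continuous_on) (auto intro: DERIV_isCont[OF deriv])
  have decreasing: "f y < f x" if "0 \<le> x" "x < y" "y \<le> x0" for x y
  proof (rule DERIV_neg_imp_decreasing_open[OF \<open>x < y\<close> _ cont[OF \<open>0 \<le> x\<close>]])
    fix t
    assume "x < t" "t < y"
    then show "\<exists>d. (f has_real_derivative d) (at t) \<and> d < 0"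
      using deriv neg that by (intro exI[of _ "f' t"]) simp
  qed
  have increasing: "f x < f y" if "x0 \<le> x" "x < y" for x y
  proof (rule DERIV_pos_imp_increasing_open[OF \<open>x < y\<close> _ cont])
    fix t
    assume "x < t" "t < y"
    then show "\<exists>d. (f has_real_derivative d) (at t) \<and> d > 0"
      using deriv pos that \<open>x0 \<ge> 0\<close> by (intro exI[of _ "f' t"]) simp
  qed (use that \<open>x0 \<ge> 0\<close> in simp)
  have "f x0 < 0"
    using decreasing[of 0 x0] assms by (cases "x0 = 0") auto
  obtain X where "X > x0" "f X > 0"
  proof -
    obtain N where "\<And>x. x \<ge> N \<Longrightarrow> f x \<ge> 1"
      using lim by (auto simp: filterlim_at_top eventually_at_top_linorder)
    then have "f (max N (x0 + 1)) \<ge> 1"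
      by simp
    then show ?thesis
      by (intro that[of "max N (x0 + 1)"]) auto
  qed
  then obtain z where "x0 \<le> z" "f z = 0"
    using IVT'[of f x0 0 X] cont[of x0 X] \<open>f x0 < 0\<close> \<open>x0 \<ge> 0\<close> by auto
  moreover have "z \<noteq> x0"
    using \<open>f z = 0\<close> \<open>f x0 < 0\<close> by auto
  moreover have "f x < 0" if "0 < x" "x < z" for x
    using decreasing[of 0 x] increasing[of x z] \<open>f 0 \<le> 0\<close> \<open>f z = 0\<close> that by (cases "x \<le> x0") auto
  moreover have "f x > 0" if "z < x" for x
    using increasing[of z x] \<open>x0 \<le> z\<close> \<open>f z = 0\<close> that by auto
  ultimately show ?thesis
    unfolding sign_change_at_def by (intro exI[of _ z]) auto
qed

text \<open>This is b0 with numerator and denominator multiplied by e^(-theta2 x); see b0_eq_b0_form.\<close>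
definition b0_form :: "real \<Rightarrow> real \<Rightarrow> real \<Rightarrow> real \<Rightarrow> real \<Rightarrow> real" where
  "b0_form a b k q x = (1 + k*x - exp (b*x)) / (q * (exp ((a+b)*x) - 1))"

definition dnum :: "real \<Rightarrow> real \<Rightarrow> real \<Rightarrow> real \<Rightarrow> real" where
  "dnum a b k x = a * exp ((a+2*b)*x) + (k - (a+b) - (a+b)*k*x) * exp ((a+b)*x) + b * exp (b*x) - k"

definition dnum1 :: "real \<Rightarrow> real \<Rightarrow> real \<Rightarrow> real \<Rightarrow> real" where
  "dnum1 a b k x = a*(a+2*b) * exp ((a+b)*x) - (a+b)^2 * (1 + k*x) * exp (a*x) + b^2"

definition dnum2 :: "real \<Rightarrow> real \<Rightarrow> real \<Rightarrow> real \<Rightarrow> real" where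
  "dnum2 a b k x = a*(a+2*b) * exp (b*x) - (a+b) * (a + k + a*k*x)"

lemma exp_add_mult: "exp ((a+b)*(x::real)) = exp (a*x) * exp (b*x)"
  by (simp add: mult_exp_exp distrib_right)

lemma exp_add_double_mult: "exp ((a+2*b)*(x::real)) = exp (a*x) * exp (b*x) * exp (b*x)"
  by (simp add: mult_exp_exp algebra_simps)

lemma dnum2_has_derivative:
  "(dnum2 a b k has_real_derivative a*b*(a+2*b) * exp (b*x) - (a+b)*a*k) (at x)"
  unfolding dnum2_def[abs_def] by (auto intro!: derivative_eq_intros simp: algebra_simps)

lemma dnum1_has_derivative:
  "(dnum1 a b k has_real_derivative (a+b) * exp (a*x) * dnum2 a b k x) (at x)"
  unfolding dnum1_def[abs_def] dnum2_def
  by (rule derivative_eq_intros refl)+ (simp only: exp_add_mult[of a b x], algebra)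

lemma dnum_has_derivative:
  "(dnum a b k has_real_derivative exp (b*x) * dnum1 a b k x) (at x)"
  unfolding dnum_def[abs_def] dnum1_def
  by (rule derivative_eq_intros refl)+ (simp only: exp_add_mult[of a b x] exp_add_double_mult[of a b x], algebra)

lemma dnum_eq_quotient_numerator:
  "(k - b * exp (b*x)) * (exp ((a+b)*x) - 1) - (1 + k*x - exp (b*x)) * ((a+b) * exp ((a+b)*x))
     = dnum a b k x"
  unfolding dnum_def exp_add_mult[of a b x] exp_add_double_mult[of a b x] by algebra

lemma b0_form_has_derivative:
  assumes "(a+b)*x \<noteq> 0" "q \<noteq> 0"
  shows "(b0_form a b k q has_real_derivative dnum a b k x / (q * (exp ((a+b)*x) - 1)^2)) (at x)"
proof -
  have "exp ((a+b)*x) \<noteq> 1"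
    using assms(1) by simp
  then have "(b0_form a b k q has_real_derivative
      ((k - b * exp (b*x)) * (q * (exp ((a+b)*x) - 1)) - (1 + k*x - exp (b*x)) * (q * ((a+b) * exp ((a+b)*x))))
        / (q * (exp ((a+b)*x) - 1))^2) (at x)"
    unfolding b0_form_def[abs_def] using assms(2)
    by (auto intro!: derivative_eq_intros simp: power2_eq_square)
  moreover have "(k - b * exp (b*x)) * (q * (exp ((a+b)*x) - 1))
      - (1 + k*x - exp (b*x)) * (q * ((a+b) * exp ((a+b)*x))) = q * dnum a b k x"
    unfolding dnum_eq_quotient_numerator[symmetric] by (simp add: algebra_simps)
  ultimately show ?thesis
    using assms(2) by (simp add: power_mult_distrib power2_eq_square mult_ac)
qed

lemma dnum_over_square_tendsto_0:
  "((\<lambda>x. dnum a b k x / x^2) \<longlongrightarrow> (a+b)*(a*b - (a+b)*k) / 2) (at_right 0)"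
  unfolding dnum_def
  by (real_asymp simp add: algebra_simps power2_eq_square) (simp add: field_simps)

lemma dnum2_sign_change:
  assumes "a > 0" "b > 0" "k > 0" "a*b < (a+b)*k"
  shows "\<exists>z>0. dnum2 a b k z = 0 \<and> sign_change_at (dnum2 a b k) z"
proof -
  define c where "c = a*b*(a+2*b)"
  define r where "r = (a+b)*a*k / c"
  define x0 where "x0 = max 0 (ln r / b)"
  have "c > 0" "r > 0"
    using assms unfolding c_def r_def by simp_all
  then have "c * r = (a+b)*a*k"
    unfolding r_def by simp
  then have factor: "c * exp (b*x) - (a+b)*a*k = c * (exp (b*x) - r)" for x
    by (simp add: right_diff_distrib)
  have exp_vs_r: "exp (b*x) < r \<longleftrightarrow> x < ln r / b" "r < exp (b*x) \<longleftrightarrow> ln r / b < x" for x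
    using \<open>r > 0\<close> \<open>b > 0\<close>
    by (metis exp_less_cancel_iff exp_ln mult.commute pos_less_divide_eq pos_divide_less_eq)+
  have "sign_change_at (\<lambda>x. a*b*(a+2*b) * exp (b*x) - (a+b)*a*k) x0"
    unfolding sign_change_at_def c_def[symmetric] factor
  proof (intro conjI allI impI)
    fix x
    assume "0 < x \<and> x < x0"
    then have "x < ln r / b"
      unfolding x0_def by (auto simp: max_def split: if_splits)
    then show "c * (exp (b*x) - r) < 0"
      using exp_vs_r \<open>c > 0\<close> by (simp add: mult_pos_neg)
  next
    fix x
    assume "x0 < x"
    then have "ln r / b < x"
      unfolding x0_def by simp
    then show "c * (exp (b*x) - r) > 0"
      using exp_vs_r \<open>c > 0\<close> by simp
  qed
  then have "\<exists>z>x0. dnum2 a b k z = 0 \<and> sign_change_at (dnum2 a b k) z"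
  proof (rule sign_change_at_from_deriv[OF dnum2_has_derivative, rotated])
    show "dnum2 a b k 0 \<le> 0" "0 < x0 \<or> dnum2 a b k 0 < 0"
      using assms(4) by (simp_all add: dnum2_def algebra_simps)
    show "filterlim (dnum2 a b k) at_top at_top"
      unfolding dnum2_def[abs_def] using assms(1-3) by real_asymp
  qed (simp add: x0_def)
  moreover have "x0 \<ge> 0"
    unfolding x0_def by simp
  ultimately show ?thesis
    by (meson order.strict_trans1)
qed

lemma dnum1_sign_change:
  assumes "a > 0" "b > 0" "k > 0" "a*b < (a+b)*k"
  shows "\<exists>z>0. dnum1 a b k z = 0 \<and> sign_change_at (dnum1 a b k) z"
proof -
  obtain z2 where "z2 > 0" "sign_change_at (dnum2 a b k) z2"
    using dnum2_sign_change[OF assms] by blast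
  then have "sign_change_at (\<lambda>x. (a+b) * exp (a*x) * dnum2 a b k x) z2"
    using assms by (intro sign_change_at_mult_pos) auto
  then have "\<exists>z>z2. dnum1 a b k z = 0 \<and> sign_change_at (dnum1 a b k) z"
  proof (rule sign_change_at_from_deriv[OF dnum1_has_derivative, rotated])
    show "dnum1 a b k 0 \<le> 0" "0 < z2 \<or> dnum1 a b k 0 < 0"
      using \<open>z2 > 0\<close> by (simp_all add: dnum1_def power2_eq_square algebra_simps)
    show "filterlim (dnum1 a b k) at_top at_top"
      unfolding dnum1_def[abs_def] using assms(1-3) by real_asymp
  qed (use \<open>z2 > 0\<close> in simp)
  then show ?thesis
    using \<open>z2 > 0\<close> by (meson order.strict_trans)
qed

lemma dnum_sign_change:
  assumes "a > 0" "b > 0" "k > 0" "a*b < (a+b)*k"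
  shows "\<exists>z>0. dnum a b k z = 0 \<and> sign_change_at (dnum a b k) z \<and> dnum1 a b k z > 0"
proof -
  obtain z1 where "z1 > 0" "sign_change_at (dnum1 a b k) z1"
    using dnum1_sign_change[OF assms] by blast
  then have "sign_change_at (\<lambda>x. exp (b*x) * dnum1 a b k x) z1"
    by (intro sign_change_at_mult_pos) auto
  then have "\<exists>z>z1. dnum a b k z = 0 \<and> sign_change_at (dnum a b k) z"
  proof (rule sign_change_at_from_deriv[OF dnum_has_derivative, rotated])
    show "dnum a b k 0 \<le> 0" "0 < z1 \<or> dnum a b k 0 < 0"
      using \<open>z1 > 0\<close> by (simp_all add: dnum_def)
    show "filterlim (dnum a b k) at_top at_top"
      unfolding dnum_def[abs_def] using assms(1-3) by real_asymp
  qed (use \<open>z1 > 0\<close> in simp)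
  then obtain z where "z > z1" "dnum a b k z = 0" "sign_change_at (dnum a b k) z"
    by blast
  moreover have "dnum1 a b k z > 0"
    using \<open>z > z1\<close> \<open>sign_change_at (dnum1 a b k) z1\<close> by (simp add: sign_change_at_def)
  ultimately show ?thesis
    using \<open>z1 > 0\<close> by (intro exI[of _ z]) simp
qed

lemma b0_form_deriv_tendsto_0:
  assumes "a + b \<noteq> 0" "q \<noteq> 0"
  shows "((\<lambda>x. dnum a b k x / (q * (exp ((a+b)*x) - 1)^2))
           \<longlongrightarrow> (a*b - (a+b)*k) / (2*q*(a+b))) (at_right 0)"
proof -
  have "((\<lambda>x. (exp ((a+b)*x) - 1) / x) \<longlongrightarrow> a + b) (at_right 0)"
    by real_asymp
  then have "((\<lambda>x. (dnum a b k x / x^2) / (q * ((exp ((a+b)*x) - 1) / x)^2))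
      \<longlongrightarrow> ((a+b)*(a*b - (a+b)*k) / 2) / (q * (a+b)^2)) (at_right 0)"
    using assms by (intro tendsto_intros dnum_over_square_tendsto_0) auto
  also have "((a+b)*(a*b - (a+b)*k) / 2) / (q * (a+b)^2) = (a*b - (a+b)*k) / (2*q*(a+b))"
    using assms by (simp add: power2_eq_square)
  finally show ?thesis
    by (rule Lim_transform_eventually)
      (auto intro: eventually_mono[OF eventually_at_right_less] simp: power_divide)
qed

lemma DERIV_quotient_at_root:
  assumes "(f has_real_derivative f') (at x)" "(g has_real_derivative g') (at x)"
    and "f x = 0" "g x \<noteq> 0"
  shows "((\<lambda>y. f y / g y) has_real_derivative f' / g x) (at x)"
  using DERIV_divide[OF assms(1,2,4)] assms(3,4) by (simp add: power2_eq_square)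

lemma b0_form_shape:
  fixes f :: "real \<Rightarrow> real"
  assumes "a > 0" "b > 0" "k > 0" "a*b < (a+b)*k" "q > 0"
    and f: "\<And>x. x > 0 \<Longrightarrow> f x = b0_form a b k q x"
  shows "(\<exists>!z. z > 0 \<and> deriv f z = 0)
       \<and> (\<exists>z>0. deriv f z = 0
           \<and> (\<forall>x. 0 < x \<and> x < z \<longrightarrow> deriv f x < 0)
           \<and> (\<exists>L. (deriv f \<longlongrightarrow> L) (at_right 0) \<and> L < 0)
           \<and> (\<forall>x. x > z \<longrightarrow> deriv f x > 0)
           \<and> deriv (deriv f) z > 0)"
proof -
  define den where "den x = q * (exp ((a+b)*x) - 1)^2" for x
  have den_pos: "den x > 0" if "x > 0" for x
    using that assms unfolding den_def by simp
  have deriv_f: "deriv f x = dnum a b k x / den x" if "x > 0" for x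
  proof -
    have "eventually (\<lambda>y. f y = b0_form a b k q y) (nhds x)"
      using eventually_nhds_in_open[of "{0<..}" x] that by (auto elim!: eventually_mono intro: f)
    then have "deriv f x = deriv (b0_form a b k q) x"
      by (rule deriv_cong_ev) simp
    also have "\<dots> = dnum a b k x / den x"
      unfolding den_def using that assms by (intro DERIV_imp_deriv b0_form_has_derivative) auto
    finally show ?thesis .
  qed
  obtain z where "z > 0" "dnum a b k z = 0" "sign_change_at (dnum a b k) z" "dnum1 a b k z > 0"
    using dnum_sign_change[OF assms(1-4)] by blast
  have zero: "deriv f z = 0"
    using deriv_f \<open>z > 0\<close> \<open>dnum a b k z = 0\<close> by simp
  have sign: "sign_change_at (deriv f) z"
    using \<open>sign_change_at (dnum a b k) z\<close> deriv_f den_pos \<open>z > 0\<close>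
    by (auto simp: sign_change_at_def divide_neg_pos)
  have unique: "\<exists>!y. y > 0 \<and> deriv f y = 0"
  proof (rule ex1I[of _ z])
    fix y
    assume "y > 0 \<and> deriv f y = 0"
    with sign show "y = z"
      unfolding sign_change_at_def by (cases y z rule: linorder_cases) auto
  qed (use \<open>z > 0\<close> zero in simp)
  have "(deriv f \<longlongrightarrow> (a*b - (a+b)*k) / (2*q*(a+b))) (at_right 0)"
    by (rule Lim_transform_eventually[OF b0_form_deriv_tendsto_0])
      (use assms in \<open>auto simp: deriv_f den_def intro: eventually_mono[OF eventually_at_right_less]\<close>)
  moreover have "(a*b - (a+b)*k) / (2*q*(a+b)) < 0"
    using assms by (simp add: divide_neg_pos)
  moreover have "deriv (deriv f) z = exp (b*z) * dnum1 a b k z / den z"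
  proof (rule DERIV_imp_deriv, rule has_field_derivative_transform_within_open[where S = "{0<..}"])
    show "((\<lambda>x. dnum a b k x / den x) has_real_derivative exp (b*z) * dnum1 a b k z / den z) (at z)"
      using den_pos[OF \<open>z > 0\<close>] unfolding den_def
      by (intro DERIV_quotient_at_root[OF dnum_has_derivative _ \<open>dnum a b k z = 0\<close>])
        (auto intro!: derivative_eq_intros)
  qed (use deriv_f \<open>z > 0\<close> in auto)
  then have "deriv (deriv f) z > 0"
    using den_pos[OF \<open>z > 0\<close>] \<open>dnum1 a b k z > 0\<close> by simp
  ultimately show ?thesis
    using unique \<open>z > 0\<close> zero sign unfolding sign_change_at_def by blast
qed

lemma theta2_has_derivative:
  assumes "q > 0" "sg \<noteq> 0"
  shows "(theta2 mu sg q has_real_derivative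
           - theta2 mu sg q c / sqrt ((c - mu)^2 + 2 * q * sg^2)) (at c)"
proof -
  define S where "S = sqrt ((c - mu)^2 + 2 * q * sg^2)"
  have "(c - mu)^2 + 2 * q * sg^2 > 0"
    using assms by (simp add: add_nonneg_pos)
  then have "S > 0"
    unfolding S_def by simp
  have "(theta2 mu sg q has_real_derivative (1 - (c - mu) / S) / sg^2) (at c)"
    unfolding theta2_def[abs_def] S_def using \<open>(c - mu)^2 + 2 * q * sg^2 > 0\<close> assms(2)
    by (auto intro!: derivative_eq_intros simp: field_simps)
  then show ?thesis
    by (rule DERIV_cong)
      (use \<open>S > 0\<close> assms(2) in \<open>unfold theta2_def S_def[symmetric], simp add: field_simps\<close>)
qed

lemma b0_eq_b0_form:
  assumes "q \<noteq> 0" "x \<noteq> 0" "theta1 mu sg q c \<noteq> theta2 mu sg q c"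
  shows "b0 mu sg q x c
           = b0_form (theta1 mu sg q c) (- theta2 mu sg q c) (c * deriv (theta2 mu sg q) c) q x"
proof -
  define A B D where "A = theta1 mu sg q c" and "B = theta2 mu sg q c"
    and "D = deriv (theta2 mu sg q) c"
  have "exp (A*x) \<noteq> exp (B*x)"
    using assms unfolding A_def B_def by simp
  moreover have "exp ((A + - B)*x) = exp (A*x) / exp (B*x)" "exp (- B*x) = 1 / exp (B*x)"
    by (simp_all add: exp_diff exp_minus field_simps)
  ultimately show ?thesis
    unfolding b0_def b0_form_def A_def[symmetric] B_def[symmetric] D_def[symmetric]
    using assms(1) by (simp only:) (simp add: field_simps)
qed

lemma b0_reduction:
  assumes "mu > 0" "sg > 0" "q > 0" "c > q * sg^2 / (2 * mu)"
  obtains a b k where "a > 0" "b > 0" "k > 0" "a*b < (a+b)*k"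
    "\<And>x. x > 0 \<Longrightarrow> b0 mu sg q x c = b0_form a b k q x"
proof -
  define u S where "u = c - mu" and "S = sqrt (u^2 + 2 * q * sg^2)"
  define a b k where "a = theta1 mu sg q c" and "b = - theta2 mu sg q c"
    and "k = c * deriv (theta2 mu sg q) c"
  have "sg^2 > 0" "2 * q * sg^2 > 0"
    using assms by simp_all
  have "S > \<bar>u\<bar>"
    unfolding S_def using \<open>2 * q * sg^2 > 0\<close> by (intro real_less_rsqrt) simp
  have a_eq: "a = (u + S) / sg^2" and b_eq: "b = (S - u) / sg^2"
    unfolding a_def b_def theta1_def theta2_def S_def u_def by (simp_all add: minus_divide_left)
  have "a > 0" "b > 0"
    unfolding a_eq b_eq using \<open>S > \<bar>u\<bar>\<close> \<open>sg^2 > 0\<close> by (simp_all add: abs_less_iff)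
  have c_mu: "c * (2 * mu) > q * sg^2"
    using assms by (simp add: pos_divide_less_eq)
  moreover have "q * sg^2 > 0"
    using assms by simp
  ultimately have "c * (2 * mu) > 0"
    by linarith
  then have "c > 0"
    using assms(1) by (simp add: zero_less_mult_iff)
  have k_eq: "k = c * b / S"
    unfolding k_def b_def S_def u_def using assms(3) \<open>sg > 0\<close>
    by (simp add: DERIV_imp_deriv[OF theta2_has_derivative])
  have "S < c + mu"
    unfolding S_def u_def using c_mu \<open>c > 0\<close> assms(1)
    by (intro real_less_lsqrt) (auto simp: power2_eq_square algebra_simps)
  \<comment> \<open>ab < (a+b)k reduces to u + S < 2c, i.e. S < c + mu, which is the hypothesis on c.\<close>
  have "a*b = (u + S) * b / sg^2" "(a+b)*k = 2 * c * b / sg^2"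
    unfolding a_eq k_eq b_eq using \<open>S > \<bar>u\<bar>\<close> \<open>sg^2 > 0\<close> by (auto simp: field_simps)
  then have "a*b < (a+b)*k"
    using \<open>S < c + mu\<close> \<open>b > 0\<close> \<open>sg^2 > 0\<close> unfolding u_def by (simp add: divide_strict_right_mono)
  moreover have "k > 0"
    unfolding k_eq using \<open>c > 0\<close> \<open>b > 0\<close> \<open>S > \<bar>u\<bar>\<close> by simp
  moreover have "b0 mu sg q x c = b0_form a b k q x" if "x > 0" for x
    unfolding a_def b_def k_def using that assms(3) \<open>a > 0\<close> \<open>b > 0\<close>
    by (intro b0_eq_b0_form) (auto simp: a_def b_def)
  ultimately show ?thesis
    using that \<open>a > 0\<close> \<open>b > 0\<close> by blast
qed

theorem mainTheorem16:
  fixes mu sg q cbar :: real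
  assumes "mu > 0" and "sg > 0" and "q > 0"
    and "cbar > q * sg^2 / (2 * mu)"
  shows "(\<exists>!z. z > 0 \<and> deriv (\<lambda>x. b0 mu sg q x cbar) z = 0)
       \<and> (\<exists>z > 0. deriv (\<lambda>x. b0 mu sg q x cbar) z = 0
           \<and> (\<forall>x. 0 < x \<and> x < z \<longrightarrow> deriv (\<lambda>y. b0 mu sg q y cbar) x < 0)
           \<and> (\<exists>L. ((\<lambda>x. deriv (\<lambda>y. b0 mu sg q y cbar) x) \<longlongrightarrow> L) (at_right 0) \<and> L < 0)
           \<and> (\<forall>x. x > z \<longrightarrow> deriv (\<lambda>y. b0 mu sg q y cbar) x > 0)
           \<and> deriv (\<lambda>x. deriv (\<lambda>y. b0 mu sg q y cbar) x) z > 0)"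
proof -
  obtain a b k where params: "a > 0" "b > 0" "k > 0" "a*b < (a+b)*k"
    and reduced: "\<And>x. x > 0 \<Longrightarrow> b0 mu sg q x cbar = b0_form a b k q x"
    using b0_reduction[OF assms] by blast
  show ?thesis
    using b0_form_shape[OF params \<open>q > 0\<close> reduced] by simp
qed

end
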